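(* The inclusion $\mathrm{PF}(\Pi)\subseteq\mathrm{CDUS}(\Pi)$ does not hold in general: there exists a (finite) family of policies $\Pi$ such that $\mathrm{PF}(\Pi)\not\subseteq\mathrm{CDUS}(\Pi)$.
   Context: A family of policies $\Pi=\{\pi_1,\pi_2,\dots\}$ of a multi-objective decision problem with $d$ objectives is given, each $\pi$ having a random return vector $\mathbf{Z}^\pi\in\mathbb{R}^d$ with finite mean $\mathbf{V}^\pi=\mathbb{E}[\mathbf{Z}^\pi]$; the return distributions of the policies may be arbitrary (e.g. finitely supported). For $\mathbf{x},\mathbf{y}\in\mathbb{R}^d$: $\mathbf{y}\preceq_p\mathbf{x}$ iff $y_i\le x_i$ for all $i$; $\mathbf{x}\succ_p\mathbf{y}$ iff $x_i\ge y_i$ for all $i$ and $x_i>y_i$ for some $i$. CDF: $F_{\mathbf{X}}(\mathbf{x})=P(\mathbf{X}\preceq_p\mathbf{x})$; $\mathbf{X}\succeq_{\mathrm{FSD}}\mathbf{Y}$ iff $F_{\mathbf{X}}\le F_{\mathbf{Y}}$ pointwise, $\succ_{\mathrm{FSD}}$ additionally requiring strict inequality somewhere; $\mathbf{X}\succ_d\mathbf{Y}$ iff $\mathbf{X}\succeq_{\mathrm{FSD}}\mathbf{Y}$ and $X_j\succ_{\mathrm{FSD}}Y_j$ for some marginal $j$. For weights $\lambda\in\Delta^{|\Pi|}$ (probability vectors), $\sum_i\lambda_i\mathbf{Z}^{\pi_i}$ is the mixture distribution with CDF $\sum_i\lambda_iF_{\mathbf{Z}^{\pi_i}}$. $\mathrm{PF}(\Pi)=\{\pi\in\Pi:\nexists\pi'\in\Pi,\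 \mathbf{V}^{\pi'}\succ_p\mathbf{V}^\pi\}$; $\mathrm{CDUS}(\Pi)=\{\pi\in\Pi:\nexists\lambda\in\Delta^{|\Pi|},\ \sum_i\lambda_i\mathbf{Z}^{\pi_i}\succ_d\mathbf{Z}^\pi\}$. *)

theory Defs
  imports "HOL-Probability.Probability"
begin

text \<open>A finite family of n policies is indexed by 0..<n; policy i has return
distribution Z i, a discrete probability distribution on vectors
x :: nat \<Rightarrow> real, of which only the coordinates 0..<d are relevant.\<close>

definition mean_vec :: "(nat \<Rightarrow> real) pmf \<Rightarrow> nat \<Rightarrow> real" where
  "mean_vec Z j = measure_pmf.expectation Z (\<lambda>y. y j)"

definition pareto_dom :: "nat \<Rightarrow> (nat \<Rightarrow> real) \<Rightarrow> (nat \<Rightarrow> real) \<Rightarrow> bool" where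
  "pareto_dom d x y \<longleftrightarrow> (\<forall>i<d. y i \<le> x i) \<and> (\<exists>i<d. y i < x i)"

definition cdf_vec :: "nat \<Rightarrow> (nat \<Rightarrow> real) pmf \<Rightarrow> (nat \<Rightarrow> real) \<Rightarrow> real" where
  "cdf_vec d Z x = measure_pmf.prob Z {y. \<forall>j<d. y j \<le> x j}"

definition marg_cdf :: "(nat \<Rightarrow> real) pmf \<Rightarrow> nat \<Rightarrow> real \<Rightarrow> real" where
  "marg_cdf Z j t = measure_pmf.prob Z {y. y j \<le> t}"

definition prob_simplex :: "nat \<Rightarrow> (nat \<Rightarrow> real) set" where
  "prob_simplex n = {lam. (\<forall>i<n. 0 \<le> lam i) \<and> (\<Sum>i<n. lam i) = 1}"

definition mix_cdf :: "nat \<Rightarrow> nat \<Rightarrow> (nat \<Rightarrow> real) \<Rightarrow> (nat \<Rightarrow> (nat \<Rightarrow> real) pmf) \<Rightarrow> (nat \<Rightarrow> real) \<Rightarrow> real" where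
  "mix_cdf n d lam Z x = (\<Sum>i<n. lam i * cdf_vec d (Z i) x)"

definition mix_marg_cdf :: "nat \<Rightarrow> (nat \<Rightarrow> real) \<Rightarrow> (nat \<Rightarrow> (nat \<Rightarrow> real) pmf) \<Rightarrow> nat \<Rightarrow> real \<Rightarrow> real" where
  "mix_marg_cdf n lam Z j t = (\<Sum>i<n. lam i * marg_cdf (Z i) j t)"

text \<open>X \<succ>_d Y, expressed via the joint CDFs FX, FY and marginal CDFs GX, GY:
  X \<succeq>_FSD Y (FX \<le> FY pointwise) and some marginal j strictly FSD-dominates.\<close>
definition d_dom :: "nat \<Rightarrow> ((nat \<Rightarrow> real) \<Rightarrow> real) \<Rightarrow> (nat \<Rightarrow> real \<Rightarrow> real)
    \<Rightarrow> ((nat \<Rightarrow> real) \<Rightarrow> real) \<Rightarrow> (nat \<Rightarrow> real \<Rightarrow> real) \<Rightarrow> bool" where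
  "d_dom d FX GX FY GY \<longleftrightarrow> (\<forall>x. FX x \<le> FY x) \<and>
     (\<exists>j<d. (\<forall>t. GX j t \<le> GY j t) \<and> (\<exists>t. GX j t < GY j t))"

definition PF :: "nat \<Rightarrow> nat \<Rightarrow> (nat \<Rightarrow> (nat \<Rightarrow> real) pmf) \<Rightarrow> nat set" where
  "PF n d Z = {k. k < n \<and> \<not> (\<exists>k'<n. pareto_dom d (mean_vec (Z k')) (mean_vec (Z k)))}"

definition CDUS :: "nat \<Rightarrow> nat \<Rightarrow> (nat \<Rightarrow> (nat \<Rightarrow> real) pmf) \<Rightarrow> nat set" where
  "CDUS n d Z = {k. k < n \<and> \<not> (\<exists>lam\<in>prob_simplex n.
      d_dom d (mix_cdf n d lam Z) (mix_marg_cdf n lam Z) (cdf_vec d (Z k)) (marg_cdf (Z k)))}"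

end

theory Submission
  imports Defs
begin

text \<open>Take two objectives and three policies: policy 0 returns (1,0) and policy 1 returns (0,1)
  deterministically, while policy 2 returns (1,0) or (0,1/2) with probability 1/2 each. The mean
  (1/2,1/4) of policy 2 is Pareto-dominated by neither (1,0) nor (0,1), so policy 2 is on the Pareto
  front. But the even mixture of policies 0 and 1 arises from policy 2 by moving its atom (0,1/2) up
  to (0,1); this lowers every joint CDF value and strictly lowers the second marginal CDF at 1/2.\<close>

lemma pareto_dom_irrefl: "\<not> pareto_dom d x x"
  by (simp add: pareto_dom_def)

lemma not_pareto_dom_if_less: "i < d \<Longrightarrow> x i < y i \<Longrightarrow> \<not> pareto_dom d x y"
  by (auto simp: pareto_dom_def not_le)

lemma prob_pmf_of_pair:
  assumes "a \<noteq> b"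
  shows "measure_pmf.prob (pmf_of_set {a, b}) A = (indicator A a + indicator A b) / 2"
  using assms by (subst measure_pmf_of_set) (auto simp: indicator_def)

lemma expectation_pmf_of_pair:
  assumes "a \<noteq> b"
  shows "measure_pmf.expectation (pmf_of_set {a, b}) f = (f a + f b) / (2 :: real)"
  using assms by (subst integral_pmf_of_set) auto

lemma cdf_vec_pmf_of_pair:
  assumes "a \<noteq> b"
  shows "cdf_vec d (pmf_of_set {a, b}) x
           = (cdf_vec d (return_pmf a) x + cdf_vec d (return_pmf b) x) / 2"
  using assms by (simp add: cdf_vec_def prob_pmf_of_pair)

lemma marg_cdf_pmf_of_pair:
  assumes "a \<noteq> b"
  shows "marg_cdf (pmf_of_set {a, b}) j t
           = (marg_cdf (return_pmf a) j t + marg_cdf (return_pmf b) j t) / 2"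
  using assms by (simp add: marg_cdf_def prob_pmf_of_pair)

lemma cdf_vec_return_pmf_antimono:
  assumes "\<forall>j<d. c j \<le> b j"
  shows "cdf_vec d (return_pmf b) x \<le> cdf_vec d (return_pmf c) x"
  using assms by (auto simp: cdf_vec_def indicator_def intro: order_trans)

lemma marg_cdf_return_pmf: "marg_cdf (return_pmf a) j t = (if a j \<le> t then 1 else 0)"
  by (simp add: marg_cdf_def)

definition half_first_two :: "nat \<Rightarrow> real" where
  "half_first_two i = (if i < 2 then 1/2 else 0)"

lemma sum_half_first_two:
  assumes "2 \<le> n"
  shows "(\<Sum>i<n. half_first_two i * f i) = (f 0 + f 1) / 2"
proof -
  have "(\<Sum>i<n. half_first_two i * f i) = (\<Sum>i<2. half_first_two i * f i)"
    using assms by (intro sum.mono_neutral_right) (auto simp: half_first_two_def)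
  then show ?thesis
    by (simp add: half_first_two_def numeral_2_eq_2)
qed

lemma half_first_two_in_prob_simplex: "2 \<le> n \<Longrightarrow> half_first_two \<in> prob_simplex n"
  using sum_half_first_two[of n "\<lambda>_. 1"] by (simp add: prob_simplex_def half_first_two_def)

lemma pair_not_in_CDUS:
  assumes "2 \<le> n" "k < n" "j < d"
    and Z: "Z 0 = return_pmf a" "Z 1 = return_pmf b" "Z k = pmf_of_set {a, c}"
    and "a \<noteq> c" and below: "\<forall>i<d. c i \<le> b i" and strict: "c j < b j"
  shows "k \<notin> CDUS n d Z"
proof -
  have joint: "mix_cdf n d half_first_two Z x \<le> cdf_vec d (Z k) x" for x
    using cdf_vec_return_pmf_antimono[OF below, of x] \<open>2 \<le> n\<close> \<open>a \<noteq> c\<close>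
    by (simp add: mix_cdf_def sum_half_first_two Z[unfolded One_nat_def] cdf_vec_pmf_of_pair)
  have marginal: "mix_marg_cdf n half_first_two Z j t
      = marg_cdf (Z k) j t + (marg_cdf (return_pmf b) j t - marg_cdf (return_pmf c) j t) / 2" for t
    using \<open>2 \<le> n\<close> \<open>a \<noteq> c\<close>
    by (simp add: mix_marg_cdf_def sum_half_first_two Z[unfolded One_nat_def] marg_cdf_pmf_of_pair
                  field_simps)
  have "marg_cdf (return_pmf b) j t \<le> marg_cdf (return_pmf c) j t" for t
    using strict by (simp add: marg_cdf_return_pmf)
  moreover have "marg_cdf (return_pmf b) j (c j) < marg_cdf (return_pmf c) j (c j)"
    using strict by (simp add: marg_cdf_return_pmf)
  ultimately have "d_dom d (mix_cdf n d half_first_two Z) (mix_marg_cdf n half_first_two Z)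
                     (cdf_vec d (Z k)) (marg_cdf (Z k))"
    unfolding d_dom_def using joint \<open>j < d\<close> by (auto simp: marginal intro!: exI[of _ j])
  then show ?thesis
    using half_first_two_in_prob_simplex[OF \<open>2 \<le> n\<close>] by (auto simp: CDUS_def)
qed

definition unit_x :: "nat \<Rightarrow> real" where "unit_x j = (if j = 0 then 1 else 0)"
definition unit_y :: "nat \<Rightarrow> real" where "unit_y j = (if j = 0 then 0 else 1)"
definition half_unit_y :: "nat \<Rightarrow> real" where "half_unit_y j = (if j = 0 then 0 else 1/2)"

definition example_policies :: "nat \<Rightarrow> (nat \<Rightarrow> real) pmf" where
  "example_policies i = (if i = 0 then return_pmf unit_x else if i = 1 then return_pmf unit_y
                         else pmf_of_set {unit_x, half_unit_y})"

lemma unit_x_ne_half_unit_y: "unit_x \<noteq> half_unit_y"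
  by (metis unit_x_def half_unit_y_def zero_neq_one)

lemma example_policies_integrable: "integrable (measure_pmf (example_policies i)) (\<lambda>y. y j)"
  by (auto simp: example_policies_def intro!: integrable_measure_pmf_finite)

lemma mean_vec_example_policies:
  "mean_vec (example_policies 0) = unit_x"
  "mean_vec (example_policies 1) = unit_y"
  "mean_vec (example_policies 2) = (\<lambda>j. if j = 0 then 1/2 else 1/4)"
  using unit_x_ne_half_unit_y
  by (auto simp: mean_vec_def example_policies_def expectation_pmf_of_pair
                 unit_x_def unit_y_def half_unit_y_def)

lemma example_in_PF: "2 \<in> PF 3 2 example_policies"
proof -
  let ?V = "\<lambda>k. mean_vec (example_policies k)"
  have "\<not> pareto_dom 2 (?V 0) (?V 2)"
    unfolding mean_vec_example_policies
    by (rule not_pareto_dom_if_less[of 1]) (simp_all add: unit_x_def)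
  moreover have "\<not> pareto_dom 2 (?V 1) (?V 2)"
    unfolding mean_vec_example_policies
    by (rule not_pareto_dom_if_less[of 0]) (simp_all add: unit_y_def)
  moreover have "\<not> pareto_dom 2 (?V 2) (?V 2)"
    by (rule pareto_dom_irrefl)
  moreover have "k < 3 \<Longrightarrow> k = 0 \<or> k = 1 \<or> k = 2" for k :: nat
    by linarith
  ultimately have "\<forall>k<3. \<not> pareto_dom 2 (?V k) (?V 2)"
    by metis
  then show ?thesis
    by (simp add: PF_def)
qed

lemma example_not_in_CDUS: "2 \<notin> CDUS 3 2 example_policies"
  by (rule pair_not_in_CDUS[where j = 1 and a = unit_x and b = unit_y and c = half_unit_y])
     (auto simp: example_policies_def unit_x_ne_half_unit_y unit_y_def half_unit_y_def)

theorem mainTheorem13: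
  shows "\<exists>(n::nat) (d::nat) (Z :: nat \<Rightarrow> (nat \<Rightarrow> real) pmf).
           (\<forall>i<n. \<forall>j<d. integrable (measure_pmf (Z i)) (\<lambda>y. y j)) \<and>
           \<not> (PF n d Z \<subseteq> CDUS n d Z)"
  using example_policies_integrable example_in_PF example_not_in_CDUS by blast

end
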